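(* Let $I\subseteq\mathbb{R}$ be an open interval (possibly unbounded), $\Sigma=I\times\mathbb{R}$, and let $F\in C^\omega(\Sigma,\mathbb{R}^2)$ (real analytic) be a non-singular map of the form $F(x,y)=\big(p_2(x)y^2+p_1(x)y+p_0(x),\,q_2(x)y^2+q_1(x)y+q_0(x)\big)$. If either $p_2(x)\neq0$ for all $x\in I$ or $q_2(x)\neq0$ for all $x\in I$, then $F$ is injective.
   Context: For $F=(P,Q)$, $d_F=P_xQ_y-P_yQ_x$ is the Jacobian determinant; $F$ is non-singular if $d_F(x,y)\neq0$ for all $(x,y)\in\Sigma$. *)

theory Defs
  imports "HOL-Analysis.Analysis"
begin

definition real_analytic2_on :: "(real \<times> real \<Rightarrow> real) \<Rightarrow> (real \<times> real) set \<Rightarrow> bool" where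
  "real_analytic2_on f S \<longleftrightarrow>
     (\<forall>z\<in>S. \<exists>r>0. ball z r \<subseteq> S \<and> (\<exists>c::nat \<Rightarrow> nat \<Rightarrow> real.
        \<forall>w\<in>ball z r. ((\<lambda>(m,n). c m n * (fst w - fst z) ^ m * (snd w - snd z) ^ n) has_sum f w) UNIV))"

definition real_analytic_map_on :: "(real \<times> real \<Rightarrow> real \<times> real) \<Rightarrow> (real \<times> real) set \<Rightarrow> bool" where
  "real_analytic_map_on F S \<longleftrightarrow>
     real_analytic2_on (\<lambda>z. fst (F z)) S \<and> real_analytic2_on (\<lambda>z. snd (F z)) S"

definition jac_det :: "(real \<times> real \<Rightarrow> real \<times> real) \<Rightarrow> real \<times> real \<Rightarrow> real" where
  "jac_det F z = (let x = fst z; y = snd z in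
      deriv (\<lambda>t. fst (F (t, y))) x * deriv (\<lambda>t. snd (F (x, t))) y
    - deriv (\<lambda>t. fst (F (x, t))) y * deriv (\<lambda>t. snd (F (t, y))) x)"

end

theory Submission
  imports Defs "HOL-Real_Asymp.Real_Asymp"
begin

text \<open>For fixed x the Jacobian is a polynomial of degree at most 3 in y with cubic coefficient
  2 (p2' q2 - p2 q2'). A real cubic has a real root, so this coefficient vanishes and q2 = k p2 on
  the interval I. Subtracting k times the first component gives a map (P, R) with the same
  Jacobian and R = r1(x) y + r0(x) affine in y; evaluating the Jacobian at the vertex of P shows
  r1 \<noteq> 0. Hence every level set of R is a graph y = Y(x), along which P has derivative
  d_F / r1 \<noteq> 0, and Rolle's theorem makes P injective on it.\<close>

lemma cubic_has_real_root:
  fixes a b c d :: real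
  assumes "a \<noteq> 0"
  shows "\<exists>y. a * y ^ 3 + b * y\<^sup>2 + c * y + d = 0"
proof -
  define f where "f y = y ^ 3 + b / a * y\<^sup>2 + c / a * y + d / a" for y
  have "eventually (\<lambda>y. f y > 0) at_top" unfolding f_def by real_asymp
  then obtain v where v: "\<And>y. y \<ge> v \<Longrightarrow> f y > 0" by (auto simp: eventually_at_top_linorder)
  have "eventually (\<lambda>y. f y < 0) at_bot" unfolding f_def by real_asymp
  then obtain u where u: "\<And>y. y \<le> u \<Longrightarrow> f y < 0" by (auto simp: eventually_at_bot_linorder)
  have "u < v" using u[of v] v[of v] by force
  moreover have "continuous_on {u..v} f" unfolding f_def by (intro continuous_intros)
  ultimately obtain y where "f y = 0" using IVT'[of f u 0 v] u[of u] v[of v] by auto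
  then have "a * f y = 0" by simp
  then show ?thesis using assms by (auto simp: f_def algebra_simps)
qed

lemma proportional_if_wronskian_zero:
  fixes f g :: "real \<Rightarrow> real"
  assumes "is_interval I"
    and diff: "\<forall>x\<in>I. f differentiable (at x) \<and> g differentiable (at x)"
    and f: "\<forall>x\<in>I. f x \<noteq> 0"
    and wronskian: "\<forall>x\<in>I. deriv f x * g x = f x * deriv g x"
  obtains k where "\<forall>x\<in>I. g x = k * f x"
proof -
  have "((\<lambda>x. g x / f x) has_real_derivative 0) (at x within I)" if "x \<in> I" for x
  proof -
    have "((\<lambda>x. g x / f x) has_real_derivative (deriv g x * f x - g x * deriv f x) / (f x * f x)) (at x)"
      using diff f that by (intro DERIV_divide) (auto simp: DERIV_deriv_iff_real_differentiable)
    then show ?thesis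
      using wronskian that by (simp add: has_field_derivative_at_within mult.commute)
  qed
  then obtain k where "\<forall>x\<in>I. g x / f x = k"
    using has_field_derivative_zero_constant \<open>is_interval I\<close> is_interval_convex by blast
  with f have "\<forall>x\<in>I. g x = k * f x" by (simp add: field_simps)
  then show ?thesis by (rule that)
qed

lemma real_analytic2_on_imp_differentiable_fst:
  assumes "real_analytic2_on f S" "(x, y) \<in> S"
  shows "(\<lambda>t. f (t, y)) differentiable (at x)"
proof -
  obtain r c where "r > 0"
    and hs: "\<And>w. w \<in> ball (x, y) r \<Longrightarrow>
      ((\<lambda>(m, n). c m n * (fst w - x) ^ m * (snd w - y) ^ n) has_sum f w) UNIV"
    using assms unfolding real_analytic2_on_def by fastforce
  have sums_offset: "(\<lambda>m. c m 0 * h ^ m) sums f (x + h, y)" if "\<bar>h\<bar> < r" for h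
  proof -
    have "(x + h, y) \<in> ball (x, y) r" using that by (simp add: dist_Pair_Pair dist_real_def)
    from hs[OF this] have "((\<lambda>(m, n). c m n * h ^ m * 0 ^ n) has_sum f (x + h, y)) UNIV" by simp
    then have "((\<lambda>(m, n). c m n * h ^ m * 0 ^ n) has_sum f (x + h, y)) (range (\<lambda>m. (m, 0)))"
      by (subst has_sum_cong_neutral[where T = UNIV]) auto
    then show ?thesis
      by (subst (asm) has_sum_reindex) (auto simp: inj_on_def o_def intro: has_sum_imp_sums)
  qed
  then have sums_at: "(\<lambda>m. c m 0 * (t - x) ^ m) sums f (t, y)" if "t \<in> ball x r" for t
    using that sums_offset[of "t - x"] by (simp add: dist_real_def abs_minus_commute)
  define g where "g h = (\<Sum>m. c m 0 * h ^ m)" for h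
  have "summable (\<lambda>m. c m 0 * (r / 2) ^ m)"
    using sums_offset[of "r / 2"] \<open>r > 0\<close> by (auto simp: sums_iff)
  then obtain D where "(g has_real_derivative D) (at 0)"
    using termdiffs_strong[of "\<lambda>m. c m 0" "r / 2" 0] \<open>r > 0\<close> unfolding g_def by auto
  then have "((\<lambda>t. g (t - x)) has_real_derivative D) (at x)"
    using DERIV_shift[of g D x "- x"] by simp
  then have "((\<lambda>t. f (t, y)) has_real_derivative D) (at x)"
  proof (rule has_field_derivative_transform_within_open[where S = "ball x r"])
    show "g (t - x) = f (t, y)" if "t \<in> ball x r" for t
      using sums_at[OF that] unfolding g_def by (simp add: sums_iff)
  qed (use \<open>r > 0\<close> in auto)
  then show ?thesis by (auto simp: real_differentiable_def)
qed

lemma differentiable_coeffs_if_quadratic_differentiable: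
  fixes a0 a1 a2 :: "real \<Rightarrow> real"
  assumes "\<And>y. (\<lambda>t. a2 t * y\<^sup>2 + a1 t * y + a0 t) differentiable (at x)"
  shows "a0 differentiable (at x)" "a1 differentiable (at x)" "a2 differentiable (at x)"
proof -
  define g where "g y t = a2 t * y\<^sup>2 + a1 t * y + a0 t" for y t
  have d: "g y differentiable (at x)" for y
    using assms unfolding g_def by simp
  have "a0 = g 0" "a1 = (\<lambda>t. (g 1 t - g (-1) t) / 2)" "a2 = (\<lambda>t. (g 1 t + g (-1) t) / 2 - g 0 t)"
    by (auto simp: g_def field_simps)
  then show "a0 differentiable (at x)" "a1 differentiable (at x)" "a2 differentiable (at x)"
    using d by (auto intro!: derivative_intros)
qed

lemma differentiable_coeffs_if_real_analytic_quadratic_pair: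
  assumes F: "F = (\<lambda>(x, y). (p2 x * y\<^sup>2 + p1 x * y + p0 x, q2 x * y\<^sup>2 + q1 x * y + q0 x))"
    and "real_analytic_map_on F (I \<times> UNIV)" and "x \<in> I"
  shows "\<forall>f\<in>{p0, p1, p2, q0, q1, q2}. f differentiable (at x)"
proof -
  have P: "real_analytic2_on (\<lambda>z. fst (F z)) (I \<times> UNIV)"
    and Q: "real_analytic2_on (\<lambda>z. snd (F z)) (I \<times> UNIV)"
    using assms(2) unfolding real_analytic_map_on_def by auto
  have p: "(\<lambda>t. p2 t * y\<^sup>2 + p1 t * y + p0 t) differentiable (at x)"
    and q: "(\<lambda>t. q2 t * y\<^sup>2 + q1 t * y + q0 t) differentiable (at x)" for y
    using real_analytic2_on_imp_differentiable_fst[OF P, of x y]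
      real_analytic2_on_imp_differentiable_fst[OF Q, of x y] \<open>x \<in> I\<close>
    by (simp_all add: F)
  show ?thesis
    using differentiable_coeffs_if_quadratic_differentiable[OF p]
      differentiable_coeffs_if_quadratic_differentiable[OF q] by simp
qed

lemma jac_det_quadratic_pair:
  assumes F: "F = (\<lambda>(x, y). (p2 x * y\<^sup>2 + p1 x * y + p0 x, q2 x * y\<^sup>2 + q1 x * y + q0 x))"
    and "\<forall>f\<in>{p0, p1, p2, q0, q1, q2}. f differentiable (at x)"
  shows "jac_det F (x, y) =
    (deriv p2 x * y\<^sup>2 + deriv p1 x * y + deriv p0 x) * (2 * q2 x * y + q1 x)
    - (2 * p2 x * y + p1 x) * (deriv q2 x * y\<^sup>2 + deriv q1 x * y + deriv q0 x)"
proof -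
  have deriv_x: "deriv (\<lambda>t. a2 t * y\<^sup>2 + a1 t * y + a0 t) x = deriv a2 x * y\<^sup>2 + deriv a1 x * y + deriv a0 x"
    if "\<forall>f\<in>{a0, a1, a2}. f differentiable (at x)" for a0 a1 a2 :: "real \<Rightarrow> real"
    using that by (intro DERIV_imp_deriv)
      (auto intro!: derivative_eq_intros simp: DERIV_deriv_iff_real_differentiable)
  have deriv_y: "deriv (\<lambda>t. a2 x * t\<^sup>2 + a1 x * t + a0 x) y = 2 * a2 x * y + a1 x"
    for a0 a1 a2 :: "real \<Rightarrow> real"
    by (intro DERIV_imp_deriv) (auto intro!: derivative_eq_intros)
  show ?thesis using assms(2) by (simp add: jac_det_def F deriv_x deriv_y)
qed

lemma jac_det_quadratic_affine_pair:
  assumes F: "F = (\<lambda>(x, y). (p2 x * y\<^sup>2 + p1 x * y + p0 x, r1 x * y + r0 x))"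
    and "\<forall>f\<in>{p0, p1, p2, r0, r1}. f differentiable (at x)"
  shows "jac_det F (x, y) = (deriv p2 x * y\<^sup>2 + deriv p1 x * y + deriv p0 x) * r1 x
    - (2 * p2 x * y + p1 x) * (deriv r1 x * y + deriv r0 x)"
proof -
  have "F = (\<lambda>(x, y). (p2 x * y\<^sup>2 + p1 x * y + p0 x, (\<lambda>_. 0) x * y\<^sup>2 + r1 x * y + r0 x))"
    by (simp add: F)
  from jac_det_quadratic_pair[OF this] assms(2) show ?thesis by simp
qed

lemma jac_det_swap: "jac_det (prod.swap \<circ> F) z = - jac_det F z"
  by (simp add: jac_det_def Let_def)

lemma quadratic_pair_leading_wronskian_eq_zero:
  assumes F: "F = (\<lambda>(x, y). (p2 x * y\<^sup>2 + p1 x * y + p0 x, q2 x * y\<^sup>2 + q1 x * y + q0 x))"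
    and diff: "\<forall>f\<in>{p0, p1, p2, q0, q1, q2}. f differentiable (at x)"
    and jac: "\<forall>y. jac_det F (x, y) \<noteq> 0"
  shows "deriv p2 x * q2 x = p2 x * deriv q2 x"
proof (rule ccontr)
  assume "deriv p2 x * q2 x \<noteq> p2 x * deriv q2 x"
  define a3 where "a3 = 2 * (deriv p2 x * q2 x - p2 x * deriv q2 x)"
  define a2 where "a2 = deriv p2 x * q1 x + 2 * deriv p1 x * q2 x - 2 * p2 x * deriv q1 x - p1 x * deriv q2 x"
  define a1 where "a1 = deriv p1 x * q1 x + 2 * deriv p0 x * q2 x - 2 * p2 x * deriv q0 x - p1 x * deriv q1 x"
  define a0 where "a0 = deriv p0 x * q1 x - p1 x * deriv q0 x"
  have "a3 \<noteq> 0" using \<open>deriv p2 x * q2 x \<noteq> p2 x * deriv q2 x\<close> by (simp add: a3_def)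
  with cubic_has_real_root obtain y where "a3 * y ^ 3 + a2 * y\<^sup>2 + a1 * y + a0 = 0" by blast
  moreover have "jac_det F (x, y) = a3 * y ^ 3 + a2 * y\<^sup>2 + a1 * y + a0"
    unfolding jac_det_quadratic_pair[OF F diff] a3_def a2_def a1_def a0_def
    by (simp add: algebra_simps power2_eq_square power3_eq_cube)
  ultimately show False using jac by simp
qed

lemma has_real_derivative_along_level_line:
  fixes c :: real
  assumes F: "F = (\<lambda>(x, y). (p2 x * y\<^sup>2 + p1 x * y + p0 x, r1 x * y + r0 x))"
    and diff: "\<forall>f\<in>{p0, p1, p2, r0, r1}. f differentiable (at x)" and "r1 x \<noteq> 0"
  defines "Y \<equiv> \<lambda>t. (c - r0 t) / r1 t"
  shows "((\<lambda>t. fst (F (t, Y t))) has_real_derivative jac_det F (x, Y x) / r1 x) (at x)"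
proof -
  note jac = jac_det_quadratic_affine_pair[OF F diff, of "Y x"]
  have "(Y has_real_derivative - (deriv r1 x * Y x + deriv r0 x) / r1 x) (at x)"
    unfolding Y_def using diff \<open>r1 x \<noteq> 0\<close>
    by (auto intro!: derivative_eq_intros simp: DERIV_deriv_iff_real_differentiable[symmetric])
      (simp add: field_simps power2_eq_square)
  then have "((\<lambda>t. p2 t * (Y t)\<^sup>2 + p1 t * Y t + p0 t) has_real_derivative
      ((deriv p2 x * (Y x)\<^sup>2 + deriv p1 x * Y x + deriv p0 x) * r1 x
        - (2 * p2 x * Y x + p1 x) * (deriv r1 x * Y x + deriv r0 x)) / r1 x) (at x)"
    using diff \<open>r1 x \<noteq> 0\<close>
    by (auto intro!: derivative_eq_intros simp: DERIV_deriv_iff_real_differentiable[symmetric])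
      (simp add: field_simps power2_eq_square)
  then show ?thesis unfolding jac by (simp add: F)
qed

lemma inj_on_quadratic_affine_pair:
  fixes I :: "real set"
  assumes "is_interval I"
    and F: "F = (\<lambda>(x, y). (p2 x * y\<^sup>2 + p1 x * y + p0 x, r1 x * y + r0 x))"
    and diff: "\<forall>x\<in>I. \<forall>f\<in>{p0, p1, p2, r0, r1}. f differentiable (at x)"
    and jac: "\<forall>z\<in>I \<times> UNIV. jac_det F z \<noteq> 0"
    and r1: "\<forall>x\<in>I. r1 x \<noteq> 0"
  shows "inj_on F (I \<times> UNIV)"
proof -
  have F_neq: "F (a, ya) \<noteq> F (b, yb)" if "a \<in> I" "b \<in> I" "a < b" for a b ya yb
  proof
    assume eq: "F (a, ya) = F (b, yb)"
    define c where "c = r1 a * ya + r0 a"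
    define Y where "Y t = (c - r0 t) / r1 t" for t
    define P where "P t = fst (F (t, Y t))" for t
    have "c = r1 b * yb + r0 b" using eq by (simp add: F c_def)
    then have "Y a = ya" "Y b = yb"
      using r1 that by (simp_all add: Y_def c_def field_simps)
    then have "P a = P b" using eq by (simp add: P_def)
    have "{a..b} \<subseteq> I" by (auto intro: mem_is_interval_1_I[OF \<open>is_interval I\<close> that(1,2)])
    have P_deriv: "(P has_real_derivative jac_det F (t, Y t) / r1 t) (at t)" if "t \<in> I" for t
      using has_real_derivative_along_level_line[OF F] diff r1 that unfolding P_def Y_def by auto
    have "continuous_on {a..b} P"
      using P_deriv DERIV_isCont \<open>{a..b} \<subseteq> I\<close> by (intro continuous_at_imp_continuous_on) blast
    moreover have "P differentiable (at t)" if "a < t" "t < b" for t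
    proof -
      have "t \<in> I" using \<open>{a..b} \<subseteq> I\<close> that by auto
      then show ?thesis using P_deriv real_differentiable_def by blast
    qed
    ultimately obtain t where t: "a < t" "t < b" "(P has_real_derivative 0) (at t)"
      using Rolle[OF \<open>a < b\<close> \<open>P a = P b\<close>] by blast
    then have "t \<in> I" using \<open>{a..b} \<subseteq> I\<close> by auto
    with t have "jac_det F (t, Y t) / r1 t = 0" using DERIV_unique P_deriv by blast
    then show False using jac r1 \<open>t \<in> I\<close> by auto
  qed
  show ?thesis
  proof (rule inj_onI, clarify)
    fix a ya b yb assume ab: "a \<in> I" "b \<in> I" and eq: "F (a, ya) = F (b, yb)"
    then have "a = b" using F_neq F_neq[symmetric] by (metis linorder_neqE)
    then show "a = b \<and> ya = yb" using eq r1 ab by (simp add: F)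
  qed
qed

lemma inj_on_quadratic_pair:
  fixes I :: "real set"
  assumes "is_interval I"
    and F: "F = (\<lambda>(x, y). (p2 x * y\<^sup>2 + p1 x * y + p0 x, q2 x * y\<^sup>2 + q1 x * y + q0 x))"
    and diff: "\<forall>x\<in>I. \<forall>f\<in>{p0, p1, p2, q0, q1, q2}. f differentiable (at x)"
    and jac: "\<forall>z\<in>I \<times> UNIV. jac_det F z \<noteq> 0"
    and p2: "\<forall>x\<in>I. p2 x \<noteq> 0"
  shows "inj_on F (I \<times> UNIV)"
proof -
  note jac_F = jac_det_quadratic_pair[OF F]
  have wronskian: "\<forall>x\<in>I. deriv p2 x * q2 x = p2 x * deriv q2 x"
    using quadratic_pair_leading_wronskian_eq_zero[OF F] diff jac by auto
  obtain k where q2: "\<forall>x\<in>I. q2 x = k * p2 x"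
    using proportional_if_wronskian_zero[OF \<open>is_interval I\<close> _ p2 wronskian] diff by auto
  have dq2: "deriv q2 x = k * deriv p2 x" if "x \<in> I" for x
    using wronskian q2 p2 that by (auto simp: algebra_simps)
  define r1 where "r1 = (\<lambda>x. q1 x - k * p1 x)"
  define r0 where "r0 = (\<lambda>x. q0 x - k * p0 x)"
  define G where "G = (\<lambda>(x, y). (p2 x * y\<^sup>2 + p1 x * y + p0 x, r1 x * y + r0 x))"
  have diff_G: "\<forall>x\<in>I. \<forall>f\<in>{p0, p1, p2, r0, r1}. f differentiable (at x)"
    using diff by (auto simp: r0_def r1_def)
  have jac_G: "jac_det G (x, y) = (deriv p2 x * y\<^sup>2 + deriv p1 x * y + deriv p0 x) * r1 x
      - (2 * p2 x * y + p1 x) * (deriv r1 x * y + deriv r0 x)" if "x \<in> I" for x y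
    using jac_det_quadratic_affine_pair[OF G_def] diff_G that by blast
  have "jac_det G (x, y) = jac_det F (x, y)" if "x \<in> I" for x y
  proof -
    have diff_x: "\<forall>f\<in>{p0, p1, p2, q0, q1, q2}. f differentiable (at x)" using diff that by blast
    have r: "r1 x = q1 x - k * p1 x" "r0 x = q0 x - k * p0 x"
      by (simp_all add: r1_def r0_def)
    have dr: "deriv r1 x = deriv q1 x - k * deriv p1 x" "deriv r0 x = deriv q0 x - k * deriv p0 x"
      unfolding r1_def r0_def using diff_x
      by (auto intro!: DERIV_imp_deriv derivative_eq_intros
          simp: DERIV_deriv_iff_real_differentiable[symmetric])
    show ?thesis
      unfolding jac_G[OF that] jac_F[OF diff_x] r dr q2[rule_format, OF that] dq2[OF that]
      by (simp add: algebra_simps)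
  qed
  then have jac_G_nonzero: "\<forall>z\<in>I \<times> UNIV. jac_det G z \<noteq> 0" using jac by auto
  have "r1 x \<noteq> 0" if "x \<in> I" for x
  proof -
    define y where "y = - p1 x / (2 * p2 x)"
    have "2 * p2 x * y + p1 x = 0" using p2 that by (simp add: y_def field_simps)
    then show ?thesis using jac_G_nonzero jac_G[of x y] that by auto
  qed
  then have "inj_on G (I \<times> UNIV)"
    by (intro inj_on_quadratic_affine_pair[OF \<open>is_interval I\<close> G_def diff_G jac_G_nonzero] ballI)
  moreover have "G z = (\<lambda>(u, v). (u, v - k * u)) (F z)" if "z \<in> I \<times> UNIV" for z
    using q2 that by (auto simp: F G_def r1_def r0_def algebra_simps)
  ultimately show ?thesis
    by (metis (no_types, lifting) inj_on_def)
qed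

theorem corollary1:
  fixes I :: "real set" and p0 p1 p2 q0 q1 q2 :: "real \<Rightarrow> real"
    and F :: "real \<times> real \<Rightarrow> real \<times> real"
  assumes "open I" and "is_interval I"
    and "F = (\<lambda>(x, y). (p2 x * y ^ 2 + p1 x * y + p0 x, q2 x * y ^ 2 + q1 x * y + q0 x))"
    and "real_analytic_map_on F (I \<times> UNIV)"
    and "\<forall>z \<in> I \<times> UNIV. jac_det F z \<noteq> 0"
    and "(\<forall>x\<in>I. p2 x \<noteq> 0) \<or> (\<forall>x\<in>I. q2 x \<noteq> 0)"
  shows "inj_on F (I \<times> UNIV)"
proof -
  have diff: "\<forall>x\<in>I. \<forall>f\<in>{p0, p1, p2, q0, q1, q2}. f differentiable (at x)"
    using differentiable_coeffs_if_real_analytic_quadratic_pair[OF assms(3,4)] by blast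
  show ?thesis
    using assms(6)
  proof
    assume "\<forall>x\<in>I. p2 x \<noteq> 0"
    then show ?thesis using inj_on_quadratic_pair[OF assms(2,3) diff assms(5)] by blast
  next
    assume "\<forall>x\<in>I. q2 x \<noteq> 0"
    have "prod.swap \<circ> F =
        (\<lambda>(x, y). (q2 x * y\<^sup>2 + q1 x * y + q0 x, p2 x * y\<^sup>2 + p1 x * y + p0 x))"
      by (auto simp: assms(3))
    moreover have "\<forall>x\<in>I. \<forall>f\<in>{q0, q1, q2, p0, p1, p2}. f differentiable (at x)"
      using diff by auto
    moreover have "\<forall>z\<in>I \<times> UNIV. jac_det (prod.swap \<circ> F) z \<noteq> 0"
      using assms(5) by (simp add: jac_det_swap)
    ultimately have "inj_on (prod.swap \<circ> F) (I \<times> UNIV)"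
      using inj_on_quadratic_pair[OF assms(2)] \<open>\<forall>x\<in>I. q2 x \<noteq> 0\<close> by blast
    then show ?thesis by (rule inj_on_imageI2)
  qed
qed

end
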